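(* Assume (A1). Let $x\in\mathcal{C}$ and $\beta>\max\{\beta_2(x),\beta_3(x)\}$, and assume $\|\nabla g(x)\|\le\varepsilon_1$. If $\nabla^2g(x)\succeq-\varepsilon_2\mathrm{Id}$, then $x$ is an $(\varepsilon_1,2\varepsilon_1,\varepsilon_2+C(x)\varepsilon_1)$-approximate second-order critical point of $\min f(x)$ s.t. $h(x)=0$; in particular $$\mathrm{Hess}_{\mathcal{M}_x}f(x)\succeq-(\varepsilon_2+C(x)\varepsilon_1)\mathrm{Id},$$ where $C(x)=2\big\|\mathrm{D}(y\mapsto\mathrm{D}h(y)^* )(x)\big\|_{\mathrm{op}}/\sigma_{\min}(\mathrm{D}h(x))+\big\|\mathrm{D}(y\mapsto\mathrm{D}\lambda(y)^* )(x)\big\|_{\mathrm{op}}$.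
   Context: Let $\mathcal{E}$ be a Euclidean space with inner product $\langle\cdot,\cdot\rangle$ and norm $\|\cdot\|$ (2-norm on $\mathbb{R}^m$), and $f\colon\mathcal{E}\to\mathbb{R}$, $h=(h_1,\dots,h_m)\colon\mathcal{E}\to\mathbb{R}^m$ be $C^\infty$. $\mathrm{D}h(x)$ is the differential, $\mathrm{D}h(x)^*$ its adjoint, $\sigma_{\min}=\sigma_m$ the $m$-th singular value. $\mathcal{D}=\{x:\operatorname{rank}\mathrm{D}h(x)=m\}$; for $x\in\mathcal{D}$, $\lambda(x)=(\mathrm{D}h(x)^* )^\dagger[\nabla f(x)]$ (Moore–Penrose), smooth on $\mathcal{D}$. For $\beta\ge0$, $g(x)=f(x)-\langle h(x),\lambda(x)\rangle+\beta\|h(x)\|^2$. For $x\in\mathcal{D}$: $\mathcal{M}_x=\{y:h(y)=h(x)\}$, $\mathrm{Proj}_x$ the orthogonal projector onto $\ker\mathrm{D}h(x)$, $\mathrm{grad}_{\mathcal{M}_x}f(x)=\nabla f(x)-\mathrm{D}h(x)^*[\lambda(x)]$, $\mathrm{Hess}_{\mathcal{M}_x}f(x)=\mathrm{Proj}_x\circ(\nabla^2f(x)-\sum_i\lambda_i(x)\nabla^2h_i(x))\circ\mathrm{Proj}_x$ as an operator on $\ker\mathrm{D}h(x)$. (A1): there are $R,\underline{\sigma}>0$ with $\sigma_{\min}(\mathrm{D}h(x))\ge\underline{\sigma}$ for all $x\in\mathcal{C}=\{x:\|h(x)\|\le R\}$. For $x\in\mathcal{C}$: $C_\lambda(x)=\|\mathrm{D}\lambda(x)\|_{\mathrm{op}}$,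 $\beta_2(x)=C_\lambda(x)/\sigma_{\min}(\mathrm{D}h(x))$, $\beta_3(x)=1/\sigma_{\min}(\mathrm{D}h(x))$. $x\in\mathcal{D}$ is an $(\varepsilon_0,\varepsilon_1,\varepsilon_2)$-approximate second-order critical point if $\|h(x)\|\le\varepsilon_0$, $\|\mathrm{grad}_{\mathcal{M}_x}f(x)\|\le\varepsilon_1$ and $\mathrm{Hess}_{\mathcal{M}_x}f(x)\succeq-\varepsilon_2\mathrm{Id}$. *)

theory Defs
  imports "HOL-Analysis.Analysis"
begin

fun dderivs :: "('a::real_normed_vector \<Rightarrow> 'b::real_normed_vector) \<Rightarrow> 'a list \<Rightarrow> 'a \<Rightarrow> 'b" where
  "dderivs f [] = f"
| "dderivs f (v # vs) = (\<lambda>y. frechet_derivative (dderivs f vs) (at y) v)"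

text \<open>C-infinity on a finite-dimensional space: all iterated derivatives exist
  (and are differentiable, hence continuous) everywhere.\<close>
definition smooth_fun :: "('a::real_normed_vector \<Rightarrow> 'b::real_normed_vector) \<Rightarrow> bool" where
  "smooth_fun f \<longleftrightarrow> (\<forall>vs x. dderivs f vs differentiable (at x))"

definition grad :: "('a::real_inner \<Rightarrow> real) \<Rightarrow> 'a \<Rightarrow> 'a" where
  "grad f x = (THE D. GDERIV f x :> D)"

definition hess :: "('a::real_inner \<Rightarrow> real) \<Rightarrow> 'a \<Rightarrow> 'a \<Rightarrow> 'a" where
  "hess f x = frechet_derivative (grad f) (at x)"

definition pinv :: "('a::real_inner \<Rightarrow> 'b::real_normed_vector) \<Rightarrow> 'b \<Rightarrow> 'a" where
  "pinv A y = (THE z. (\<forall>w. norm (A z - y) \<le> norm (A w - y)) \<and>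
      (\<forall>w. (\<forall>u. norm (A w - y) \<le> norm (A u - y)) \<longrightarrow> norm z \<le> norm w))"

text \<open>k-th singular value (k >= 1) of a linear map A : E -> F, by the
  Courant--Fischer min-max characterization over k-dimensional subspaces of E;
  0 if k exceeds dim E.\<close>
definition sing_val :: "('a::euclidean_space \<Rightarrow> 'b::real_normed_vector) \<Rightarrow> nat \<Rightarrow> real" where
  "sing_val A k = (if k \<le> DIM('a) then
      Sup {Inf {norm (A v) | v. v \<in> V \<and> norm v = 1} | V. subspace V \<and> dim V = k}
    else 0)"

definition orth_proj :: "'a::real_inner set \<Rightarrow> 'a \<Rightarrow> 'a" where
  "orth_proj S v = (THE p. p \<in> S \<and> (\<forall>s\<in>S. inner (v - p) s = 0))"

definition Dh :: "('a::euclidean_space \<Rightarrow> real^'m) \<Rightarrow> 'a \<Rightarrow> 'a \<Rightarrow> real^'m" where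
  "Dh h x = frechet_derivative h (at x)"

definition sigma_min :: "('a::euclidean_space \<Rightarrow> real^'m) \<Rightarrow> 'a \<Rightarrow> real" where
  "sigma_min h x = sing_val (Dh h x) CARD('m)"

definition fullrank_set :: "('a::euclidean_space \<Rightarrow> real^'m) \<Rightarrow> 'a set" where
  "fullrank_set h = {x. dim (range (Dh h x)) = CARD('m)}"

definition lam :: "('a::euclidean_space \<Rightarrow> real) \<Rightarrow> ('a \<Rightarrow> real^'m) \<Rightarrow> 'a \<Rightarrow> real^'m" where
  "lam f h x = pinv (adjoint (Dh h x)) (grad f x)"

definition gfun :: "('a::euclidean_space \<Rightarrow> real) \<Rightarrow> ('a \<Rightarrow> real^'m) \<Rightarrow> real \<Rightarrow> 'a \<Rightarrow> real" where
  "gfun f h \<beta> x = f x - inner (h x) (lam f h x) + \<beta> * (norm (h x))\<^sup>2"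

definition riem_grad :: "('a::euclidean_space \<Rightarrow> real) \<Rightarrow> ('a \<Rightarrow> real^'m) \<Rightarrow> 'a \<Rightarrow> 'a" where
  "riem_grad f h x = grad f x - adjoint (Dh h x) (lam f h x)"

definition riem_hess :: "('a::euclidean_space \<Rightarrow> real) \<Rightarrow> ('a \<Rightarrow> real^'m) \<Rightarrow> 'a \<Rightarrow> 'a \<Rightarrow> 'a" where
  "riem_hess f h x v =
     (let P = orth_proj {w. Dh h x w = 0} in
      P (hess f x (P v) - (\<Sum>i\<in>UNIV. lam f h x $ i *\<^sub>R hess (\<lambda>y. h y $ i) x (P v))))"

definition approx_socp ::
  "('a::euclidean_space \<Rightarrow> real) \<Rightarrow> ('a \<Rightarrow> real^'m) \<Rightarrow> real \<Rightarrow> real \<Rightarrow> real \<Rightarrow> 'a \<Rightarrow> bool" where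
  "approx_socp f h e0 e1 e2 x \<longleftrightarrow>
     x \<in> fullrank_set h \<and> norm (h x) \<le> e0 \<and> norm (riem_grad f h x) \<le> e1 \<and>
     (\<forall>v. Dh h x v = 0 \<longrightarrow> inner v (riem_hess f h x v) \<ge> - e2 * (norm v)\<^sup>2)"

definition C_lam :: "('a::euclidean_space \<Rightarrow> real) \<Rightarrow> ('a \<Rightarrow> real^'m) \<Rightarrow> 'a \<Rightarrow> real" where
  "C_lam f h x = onorm (frechet_derivative (lam f h) (at x))"

definition beta2 :: "('a::euclidean_space \<Rightarrow> real) \<Rightarrow> ('a \<Rightarrow> real^'m) \<Rightarrow> 'a \<Rightarrow> real" where
  "beta2 f h x = C_lam f h x / sigma_min h x"

definition beta3 :: "('a::euclidean_space \<Rightarrow> real^'m) \<Rightarrow> 'a \<Rightarrow> real" where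
  "beta3 h x = 1 / sigma_min h x"

text \<open>C(x) = 2 ||D(y |-> Dh(y)^*)(x)||_op / sigma_min(Dh(x)) + ||D(y |-> Dlambda(y)^*)(x)||_op,
  with y |-> Dh(y)^* viewed as a map into the normed space of bounded linear maps.\<close>
definition C_const :: "('a::euclidean_space \<Rightarrow> real) \<Rightarrow> ('a \<Rightarrow> real^'m) \<Rightarrow> 'a \<Rightarrow> real" where
  "C_const f h x =
     2 * onorm (frechet_derivative (\<lambda>y. Blinfun (adjoint (Dh h y))) (at x)) / sigma_min h x
     + onorm (frechet_derivative (\<lambda>y. Blinfun (adjoint (frechet_derivative (lam f h) (at y)))) (at x))"

end

theory Submission
  imports Defs
begin

(* Where the Gram matrix Dh Dh^* is invertible -- in particular at x, since sigma_min(Dh(x)) > 0 --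
   Cramer's rule expresses lambda through first derivatives of f and h, so lambda and g are smooth
   there, and
     grad g = grad_M f - Dlambda^* h + 2 beta Dh^* h,
   where grad_M f lies in ker Dh and is therefore orthogonal to Dh^* h. Pairing grad g(x) with
   Dh(x)^* h(x) and using |Dh^* h| >= sigma_min |h| and |Dlambda^* h| <= C_lambda |h| gives
   (2 beta sigma_min - C_lambda) |h(x)| <= eps1; since beta sigma_min exceeds both 1 and C_lambda,
   this bounds |h(x)|, beta |h(x)| and then |grad_M f(x)|. On ker Dh(x) the quadratic forms of the
   Hessian of g and of Hess_M f differ only by the terms <v, Phi'(x)[v] h(x)> for
   Phi(y) = Dlambda(y)^* and, with factor 2 beta, for Phi(y) = Dh(y)^*; they are of order
   |h(x)| |v|^2 and beta |h(x)| |v|^2, which the first-order bounds control. *)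

section \<open>Smooth real-valued functions on open sets\<close>

text \<open>Smoothness is localised to an open set because \<open>\<lambda>\<close> is smooth only where \<open>Dh\<close> has
  full rank.\<close>

coinductive smooth_on :: "'a::real_normed_vector set \<Rightarrow> ('a \<Rightarrow> real) \<Rightarrow> bool" for U where
  smooth_onI: "(\<And>y. y \<in> U \<Longrightarrow> F differentiable at y) \<Longrightarrow>
     (\<And>v. smooth_on U (\<lambda>y. frechet_derivative F (at y) v)) \<Longrightarrow> smooth_on U F"

lemma smooth_on_differentiable: "smooth_on U F \<Longrightarrow> y \<in> U \<Longrightarrow> F differentiable at y"
  by (erule smooth_on.cases) auto

lemma smooth_on_directional_derivative:
  "smooth_on U F \<Longrightarrow> smooth_on U (\<lambda>y. frechet_derivative F (at y) v)"
  by (erule smooth_on.cases) auto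

lemma frechet_derivative_add_apply:
  assumes "F differentiable at y" "G differentiable at y"
  shows "frechet_derivative (\<lambda>y. F y + G y) (at y) v =
    frechet_derivative F (at y) v + frechet_derivative G (at y) v"
proof -
  have "((\<lambda>y. F y + G y) has_derivative
      (\<lambda>v. frechet_derivative F (at y) v + frechet_derivative G (at y) v)) (at y)"
    using assms by (intro has_derivative_add) (simp_all add: frechet_derivative_works[symmetric])
  then show ?thesis
    by (simp add: frechet_derivative_at[symmetric])
qed

lemma frechet_derivative_mult_apply:
  fixes F G :: "'a::real_normed_vector \<Rightarrow> real"
  assumes "F differentiable at y" "G differentiable at y"
  shows "frechet_derivative (\<lambda>y. F y * G y) (at y) v =
    F y * frechet_derivative G (at y) v + frechet_derivative F (at y) v * G y"
proof -
  have "((\<lambda>y. F y * G y) has_derivative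
      (\<lambda>v. F y * frechet_derivative G (at y) v + frechet_derivative F (at y) v * G y)) (at y)"
    using assms by (intro has_derivative_mult) (simp_all add: frechet_derivative_works[symmetric])
  then show ?thesis
    by (simp add: frechet_derivative_at[symmetric])
qed

lemma frechet_derivative_inverse_apply:
  fixes F :: "'a::real_normed_vector \<Rightarrow> real"
  assumes "F differentiable at y" "F y \<noteq> 0"
  shows "frechet_derivative (\<lambda>y. inverse (F y)) (at y) v =
    - (inverse (F y) * frechet_derivative F (at y) v * inverse (F y))"
proof -
  have "((\<lambda>y. inverse (F y)) has_derivative
      (\<lambda>v. - (inverse (F y) * frechet_derivative F (at y) v * inverse (F y)))) (at y)"
    using Deriv.has_derivative_inverse[OF assms(2) frechet_derivative_works[THEN iffD1, OF assms(1)]] .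
  then show ?thesis
    by (simp add: frechet_derivative_at[symmetric])
qed

text \<open>Closure of \<^const>\<open>smooth_on\<close> under the field operations is proved by coinduction up to
  this inductive closure: the derivative of such an expression is again such an expression.\<close>

inductive smooth_expr :: "'a::real_normed_vector set \<Rightarrow> ('a \<Rightarrow> real) \<Rightarrow> bool" for U where
  smooth: "smooth_on U F \<Longrightarrow> smooth_expr U F"
| inverse: "smooth_on U F \<Longrightarrow> (\<forall>y\<in>U. F y \<noteq> 0) \<Longrightarrow> smooth_expr U (\<lambda>y. inverse (F y))"
| const: "smooth_expr U (\<lambda>y. c)"
| add: "smooth_expr U F \<Longrightarrow> smooth_expr U G \<Longrightarrow> smooth_expr U (\<lambda>y. F y + G y)"
| mult: "smooth_expr U F \<Longrightarrow> smooth_expr U G \<Longrightarrow> smooth_expr U (\<lambda>y. F y * G y)"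
| cong: "smooth_expr U F \<Longrightarrow> (\<forall>y\<in>U. F y = G y) \<Longrightarrow> smooth_expr U G"

lemma smooth_expr_differentiable:
  assumes "open U" "smooth_expr U F" "y \<in> U"
  shows "F differentiable at y"
  using assms(2,3)
proof (induction arbitrary: y)
  case (cong F G)
  then show ?case
    using assms(1) by (metis differentiable_def has_derivative_transform_within_open)
qed (simp_all add: smooth_on_differentiable)

lemma smooth_expr_directional_derivative:
  assumes "open U" "smooth_expr U F"
  shows "smooth_expr U (\<lambda>y. frechet_derivative F (at y) v)"
  using assms(2)
proof induction
  case (smooth F)
  then show ?case
    by (intro smooth_expr.smooth smooth_on_directional_derivative)
next
  case (inverse F)
  have "smooth_expr U (\<lambda>y. (-1) * ((inverse (F y) * frechet_derivative F (at y) v) * inverse (F y)))"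
    by (intro smooth_expr.mult smooth_expr.const smooth_expr.inverse smooth_expr.smooth
        smooth_on_directional_derivative inverse)
  then show ?case
    by (rule smooth_expr.cong)
      (simp add: frechet_derivative_inverse_apply smooth_on_differentiable[OF inverse(1)] inverse(2))
next
  case (const c)
  then show ?case
    by (simp add: smooth_expr.const)
next
  case (add F G)
  have "smooth_expr U (\<lambda>y. frechet_derivative F (at y) v + frechet_derivative G (at y) v)"
    using add by (intro smooth_expr.add)
  then show ?case
    by (rule smooth_expr.cong)
      (simp add: frechet_derivative_add_apply smooth_expr_differentiable[OF assms(1)] add)
next
  case (mult F G)
  have "smooth_expr U (\<lambda>y. F y * frechet_derivative G (at y) v + frechet_derivative F (at y) v * G y)"
    using mult by (intro smooth_expr.add smooth_expr.mult)
  then show ?case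
    by (rule smooth_expr.cong)
      (simp add: frechet_derivative_mult_apply smooth_expr_differentiable[OF assms(1)] mult)
next
  case (cong F G)
  from cong.IH show ?case
    by (rule smooth_expr.cong)
      (use cong in \<open>simp add: frechet_derivative_transform_within_open[OF
          smooth_expr_differentiable[OF assms(1)] assms(1)]\<close>)
qed

lemma smooth_expr_imp_smooth_on:
  assumes "open U" and "smooth_expr U F"
  shows "smooth_on U F"
  using assms(2)
proof (coinduction arbitrary: F rule: smooth_on.coinduct)
  case (smooth_on F)
  then show ?case
    using smooth_expr_differentiable[OF assms(1)] smooth_expr_directional_derivative[OF assms(1)]
    by blast
qed

lemma smooth_on_const: "open U \<Longrightarrow> smooth_on U (\<lambda>y. c)"
  by (rule smooth_expr_imp_smooth_on) (auto intro: smooth_expr.const)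

lemma smooth_on_add: "open U \<Longrightarrow> smooth_on U F \<Longrightarrow> smooth_on U G \<Longrightarrow> smooth_on U (\<lambda>y. F y + G y)"
  by (rule smooth_expr_imp_smooth_on) (auto intro: smooth_expr.add smooth_expr.smooth)

lemma smooth_on_mult: "open U \<Longrightarrow> smooth_on U F \<Longrightarrow> smooth_on U G \<Longrightarrow> smooth_on U (\<lambda>y. F y * G y)"
  by (rule smooth_expr_imp_smooth_on) (auto intro: smooth_expr.mult smooth_expr.smooth)

lemma smooth_on_inverse:
  "open U \<Longrightarrow> smooth_on U F \<Longrightarrow> (\<forall>y\<in>U. F y \<noteq> 0) \<Longrightarrow> smooth_on U (\<lambda>y. inverse (F y))"
  by (rule smooth_expr_imp_smooth_on) (auto intro: smooth_expr.inverse)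

lemma smooth_on_cong: "open U \<Longrightarrow> smooth_on U F \<Longrightarrow> (\<forall>y\<in>U. F y = G y) \<Longrightarrow> smooth_on U G"
  by (rule smooth_expr_imp_smooth_on) (auto intro: smooth_expr.cong smooth_expr.smooth)

lemma smooth_on_divide:
  assumes "open U" "smooth_on U F" "smooth_on U G" "\<forall>y\<in>U. G y \<noteq> 0"
  shows "smooth_on U (\<lambda>y. F y / G y)"
proof -
  have "smooth_on U (\<lambda>y. F y * inverse (G y))"
    using assms by (intro smooth_on_mult smooth_on_inverse)
  then show ?thesis
    by (rule smooth_on_cong[OF assms(1)]) (simp add: divide_inverse)
qed

lemma smooth_on_sum:
  assumes "open U" "\<And>i. i \<in> I \<Longrightarrow> smooth_on U (F i)"
  shows "smooth_on U (\<lambda>y. \<Sum>i\<in>I. F i y)"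
proof (cases "finite I")
  case True
  then show ?thesis
    using assms(2) by induction (simp_all add: smooth_on_const smooth_on_add assms(1))
qed (simp add: smooth_on_const assms(1))

lemma smooth_on_prod:
  assumes "open U" "\<And>i. i \<in> I \<Longrightarrow> smooth_on U (F i)"
  shows "smooth_on U (\<lambda>y. \<Prod>i\<in>I. F i y)"
proof (cases "finite I")
  case True
  then show ?thesis
    using assms(2) by induction (simp_all add: smooth_on_const smooth_on_mult assms(1))
qed (simp add: smooth_on_const assms(1))

lemma smooth_on_det:
  fixes A :: "'a::real_normed_vector \<Rightarrow> real^'n^'n"
  assumes "open U" "\<And>i j. smooth_on U (\<lambda>y. A y $ i $ j)"
  shows "smooth_on U (\<lambda>y. det (A y))"
  unfolding det_def
  by (intro smooth_on_sum smooth_on_mult smooth_on_const smooth_on_prod assms)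

lemma has_derivative_linear_comp:
  assumes "bounded_linear l" "G differentiable at y"
  shows "((\<lambda>y. l (G y)) has_derivative (\<lambda>v. l (frechet_derivative G (at y) v))) (at y)"
  using bounded_linear.has_derivative[OF assms(1) frechet_derivative_works[THEN iffD1, OF assms(2)]] .

lemma smooth_fun_imp_smooth_on:
  fixes G :: "'a::real_normed_vector \<Rightarrow> 'b::real_normed_vector"
  assumes "smooth_fun G" "bounded_linear l"
  shows "smooth_on U (\<lambda>y. l (G y))"
proof -
  have "smooth_on U (\<lambda>y. l (dderivs G vs y))" for vs
  proof (coinduction arbitrary: vs rule: smooth_on.coinduct)
    case smooth_on
    have D: "((\<lambda>y. l (dderivs G vs y)) has_derivative (\<lambda>v. l (dderivs G (v # vs) y))) (at y)" for y
      using has_derivative_linear_comp[OF assms(2), of "dderivs G vs" y] assms(1)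
      by (simp add: smooth_fun_def)
    show ?case
    proof (intro exI[of _ "\<lambda>y. l (dderivs G vs y)"] conjI refl allI impI disjI1)
      fix y show "(\<lambda>y. l (dderivs G vs y)) differentiable at y"
        using D differentiable_def by blast
    next
      fix v
      show "\<exists>vs'. (\<lambda>y. frechet_derivative (\<lambda>y. l (dderivs G vs y)) (at y) v) =
          (\<lambda>y. l (dderivs G vs' y))"
        using frechet_derivative_at[OF D] by metis
    qed
  qed
  from this[of "[]"] show ?thesis by simp
qed

lemma smooth_fun_differentiable: "smooth_fun G \<Longrightarrow> G differentiable at y"
  unfolding smooth_fun_def by (metis dderivs.simps(1))

section \<open>Gradients, Hessians and adjoints of derivatives\<close>

lemma grad_eqI:
  fixes F :: "'a::real_inner \<Rightarrow> real"
  assumes "GDERIV F y :> D"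
  shows "grad F y = D"
  unfolding grad_def
proof (rule the_equality)
  fix D' assume "GDERIV F y :> D'"
  then have "(\<lambda>h. h \<bullet> D') = (\<lambda>h. h \<bullet> D)"
    using assms unfolding gderiv_def by (rule has_derivative_unique)
  then show "D' = D"
    by (metis vector_eq_ldot)
qed (fact assms)

lemma has_gderiv_basis_sum:
  fixes F :: "'a::euclidean_space \<Rightarrow> real"
  assumes "F differentiable at y"
  shows "GDERIV F y :> (\<Sum>b\<in>Basis. frechet_derivative F (at y) b *\<^sub>R b)"
proof -
  have lin: "linear (frechet_derivative F (at y))"
    using assms linear_frechet_derivative by blast
  have "frechet_derivative F (at y) v = v \<bullet> (\<Sum>b\<in>Basis. frechet_derivative F (at y) b *\<^sub>R b)" for v
  proof -
    have "frechet_derivative F (at y) v = frechet_derivative F (at y) (\<Sum>b\<in>Basis. (v \<bullet> b) *\<^sub>R b)"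
      by (simp add: euclidean_representation)
    also have "\<dots> = v \<bullet> (\<Sum>b\<in>Basis. frechet_derivative F (at y) b *\<^sub>R b)"
      by (simp add: linear_sum[OF lin] linear_scale[OF lin] inner_sum_right mult.commute)
    finally show ?thesis .
  qed
  then have "frechet_derivative F (at y) = (\<lambda>v. v \<bullet> (\<Sum>b\<in>Basis. frechet_derivative F (at y) b *\<^sub>R b))"
    by (rule ext)
  with frechet_derivative_works[THEN iffD1, OF assms] show ?thesis
    unfolding gderiv_def by simp
qed

lemma grad_eq_basis_sum:
  fixes F :: "'a::euclidean_space \<Rightarrow> real"
  shows "F differentiable at y \<Longrightarrow> grad F y = (\<Sum>b\<in>Basis. frechet_derivative F (at y) b *\<^sub>R b)"
  by (rule grad_eqI[OF has_gderiv_basis_sum])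

lemma has_gderiv_grad:
  fixes F :: "'a::euclidean_space \<Rightarrow> real"
  shows "F differentiable at y \<Longrightarrow> GDERIV F y :> grad F y"
  by (simp add: grad_eq_basis_sum has_gderiv_basis_sum)

lemma frechet_derivative_eq_inner_grad:
  fixes F :: "'a::euclidean_space \<Rightarrow> real"
  assumes "F differentiable at y"
  shows "frechet_derivative F (at y) v = v \<bullet> grad F y"
  by (simp add: frechet_derivative_at[OF has_gderiv_grad[OF assms, unfolded gderiv_def], symmetric])

lemma has_derivative_grad_hess:
  fixes F :: "'a::euclidean_space \<Rightarrow> real"
  assumes "open U" "x \<in> U" "smooth_on U F"
  shows "(grad F has_derivative hess F x) (at x)"
proof -
  have "((\<lambda>y. \<Sum>b\<in>Basis. frechet_derivative F (at y) b *\<^sub>R b) has_derivative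
      (\<lambda>v. \<Sum>b\<in>Basis. frechet_derivative (\<lambda>y. frechet_derivative F (at y) b) (at x) v *\<^sub>R b)) (at x)"
    using smooth_on_differentiable[OF smooth_on_directional_derivative[OF assms(3)] assms(2)]
    by (intro has_derivative_sum has_derivative_scaleR_left) (simp add: frechet_derivative_works)
  then have "(grad F has_derivative
      (\<lambda>v. \<Sum>b\<in>Basis. frechet_derivative (\<lambda>y. frechet_derivative F (at y) b) (at x) v *\<^sub>R b)) (at x)"
    by (rule has_derivative_transform_within_open[OF _ assms(1,2)])
      (simp add: grad_eq_basis_sum smooth_on_differentiable[OF assms(3)])
  then have "grad F differentiable at x"
    unfolding differentiable_def by blast
  then show ?thesis
    unfolding hess_def frechet_derivative_works .
qed

lemma smooth_on_inner_grad:
  fixes F G :: "'a::euclidean_space \<Rightarrow> real"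
  assumes "open U" "smooth_on U F" "smooth_on U G"
  shows "smooth_on U (\<lambda>y. grad F y \<bullet> grad G y)"
proof -
  have "smooth_on U (\<lambda>y. \<Sum>b\<in>Basis. frechet_derivative F (at y) b * frechet_derivative G (at y) b)"
    using assms by (intro smooth_on_sum smooth_on_mult smooth_on_directional_derivative)
  then show ?thesis
  proof (rule smooth_on_cong[OF assms(1)], intro ballI)
    fix y assume "y \<in> U"
    then show "(\<Sum>b\<in>Basis. frechet_derivative F (at y) b * frechet_derivative G (at y) b) =
        grad F y \<bullet> grad G y"
      using assms by (simp add: euclidean_inner[of "grad F y"] frechet_derivative_eq_inner_grad
          smooth_on_differentiable inner_commute)
  qed
qed

lemma vec_differentiable_componentwise:
  fixes G :: "'a::real_normed_vector \<Rightarrow> real^'m"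
  assumes "\<And>i. (\<lambda>y. G y $ i) differentiable at y"
  shows "G differentiable at y"
  unfolding differentiable_componentwise_within[of G y UNIV]
  using assms by (auto simp: Basis_vec_def inner_axis)

lemma frechet_derivative_component:
  fixes G :: "'a::euclidean_space \<Rightarrow> real^'m"
  assumes "G differentiable at y"
  shows "frechet_derivative G (at y) u $ i = u \<bullet> grad (\<lambda>y. G y $ i) y"
proof -
  have D: "((\<lambda>y. G y $ i) has_derivative (\<lambda>v. frechet_derivative G (at y) v $ i)) (at y)"
    by (rule has_derivative_linear_comp[OF bounded_linear_vec_nth assms])
  then have "(\<lambda>y. G y $ i) differentiable at y"
    using differentiable_def by blast
  then have "frechet_derivative (\<lambda>y. G y $ i) (at y) u = u \<bullet> grad (\<lambda>y. G y $ i) y"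
    by (rule frechet_derivative_eq_inner_grad)
  then show ?thesis
    by (simp add: frechet_derivative_at[OF D, symmetric])
qed

lemma adjoint_frechet_derivative:
  fixes G :: "'a::euclidean_space \<Rightarrow> real^'m"
  assumes "G differentiable at y"
  shows "adjoint (frechet_derivative G (at y)) = (\<lambda>\<mu>. \<Sum>i\<in>UNIV. \<mu> $ i *\<^sub>R grad (\<lambda>y. G y $ i) y)"
  by (rule adjoint_unique)
    (simp add: inner_vec_def frechet_derivative_component[OF assms] inner_sum_right mult.commute)

lemma Blinfun_adjoint_apply:
  fixes A :: "'a::euclidean_space \<Rightarrow> 'b::euclidean_space"
  shows "linear A \<Longrightarrow> blinfun_apply (Blinfun (adjoint A)) = adjoint A"
  by (metis adjoint_linear bounded_linear_Blinfun_apply linear_conv_bounded_linear)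

definition component_blinfun :: "'m::finite \<Rightarrow> 'a::real_normed_vector \<Rightarrow> (real^'m) \<Rightarrow>\<^sub>L 'a" where
  "component_blinfun i g = blinfun_scaleR_left g o\<^sub>L blinfun_inner_left (axis i 1)"

lemma component_blinfun_apply [simp]: "blinfun_apply (component_blinfun i g) \<mu> = \<mu> $ i *\<^sub>R g"
  by (simp add: component_blinfun_def inner_axis)

lemma bounded_linear_component_blinfun: "bounded_linear (component_blinfun i)"
  unfolding component_blinfun_def[abs_def]
  by (rule bounded_linear_compose[OF
        bounded_bilinear.bounded_linear_left[OF bounded_bilinear_blinfun_compose]
        bounded_linear_blinfun_scaleR_left])

lemma has_derivative_Blinfun_adjoint:
  fixes G :: "'a::euclidean_space \<Rightarrow> real^'m"
  assumes "open U" "x \<in> U" "\<And>i. smooth_on U (\<lambda>y. G y $ i)"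
  shows "((\<lambda>y. Blinfun (adjoint (frechet_derivative G (at y)))) has_derivative
      (\<lambda>v. \<Sum>i\<in>UNIV. component_blinfun i (hess (\<lambda>y. G y $ i) x v))) (at x)"
proof -
  have "((\<lambda>y. \<Sum>i\<in>UNIV. component_blinfun i (grad (\<lambda>y. G y $ i) y)) has_derivative
      (\<lambda>v. \<Sum>i\<in>UNIV. component_blinfun i (hess (\<lambda>y. G y $ i) x v))) (at x)"
    by (intro has_derivative_sum bounded_linear.has_derivative[OF bounded_linear_component_blinfun]
        has_derivative_grad_hess[OF assms])
  moreover have "(\<Sum>i\<in>UNIV. component_blinfun i (grad (\<lambda>y. G y $ i) y)) =
      Blinfun (adjoint (frechet_derivative G (at y)))" if "y \<in> U" for y
  proof -
    have "G differentiable at y"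
      by (rule vec_differentiable_componentwise)
        (rule smooth_on_differentiable[OF assms(3) that])
    then have "adjoint (frechet_derivative G (at y)) =
        blinfun_apply (\<Sum>i\<in>UNIV. component_blinfun i (grad (\<lambda>y. G y $ i) y))"
      by (simp add: adjoint_frechet_derivative blinfun.sum_left fun_eq_iff)
    then show ?thesis
      by (simp add: blinfun_apply_inverse)
  qed
  ultimately show ?thesis
    by (rule has_derivative_transform_within_open[OF _ assms(1,2)])
qed

lemma inner_blinfun_apply_le_onorm:
  fixes \<Psi> :: "'a::real_inner \<Rightarrow> 'b::real_normed_vector \<Rightarrow>\<^sub>L 'a"
  assumes "bounded_linear \<Psi>"
  shows "\<bar>v \<bullet> blinfun_apply (\<Psi> v) \<mu>\<bar> \<le> onorm \<Psi> * (norm v)\<^sup>2 * norm \<mu>"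
proof -
  have "\<bar>v \<bullet> blinfun_apply (\<Psi> v) \<mu>\<bar> \<le> norm v * norm (blinfun_apply (\<Psi> v) \<mu>)"
    by (rule Cauchy_Schwarz_ineq2)
  also have "\<dots> \<le> norm v * (norm (\<Psi> v) * norm \<mu>)"
    by (intro mult_left_mono norm_blinfun) simp
  also have "\<dots> \<le> norm v * ((onorm \<Psi> * norm v) * norm \<mu>)"
    using onorm[OF assms] by (intro mult_left_mono mult_right_mono) auto
  finally show ?thesis
    by (simp add: power2_eq_square algebra_simps)
qed

lemma norm_adjoint_le_onorm:
  fixes A :: "'a::euclidean_space \<Rightarrow> 'b::euclidean_space"
  assumes "bounded_linear A"
  shows "norm (adjoint A y) \<le> onorm A * norm y"
proof -
  let ?z = "adjoint A y"
  have lin: "linear A"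
    using assms bounded_linear.linear by blast
  have "norm ?z * norm ?z = A ?z \<bullet> y"
    by (simp add: adjoint_works[OF lin, symmetric] power2_norm_eq_inner[symmetric] power2_eq_square)
  also have "\<dots> \<le> norm (A ?z) * norm y"
    by (rule norm_cauchy_schwarz)
  also have "\<dots> \<le> (onorm A * norm y) * norm ?z"
    using mult_right_mono[OF onorm[OF assms, of ?z] norm_ge_zero[of y]] by (simp add: algebra_simps)
  finally have "norm ?z * norm ?z \<le> (onorm A * norm y) * norm ?z" .
  then show ?thesis
    using onorm_pos_le[OF assms] by (cases "?z = 0") (simp_all add: mult_le_cancel_right)
qed

section \<open>Pseudoinverses, singular values and orthogonal projections\<close>

lemma pinv_eqI:
  fixes A :: "'a::real_inner \<Rightarrow> 'b::real_inner"
  assumes lin: "linear A" and normal: "\<And>u. (b - A z) \<bullet> A u = 0"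
    and inj: "\<And>w. A w = 0 \<Longrightarrow> w = 0"
  shows "pinv A b = z"
proof -
  have pythagoras: "(norm (A w - b))\<^sup>2 = (norm (A (w - z)))\<^sup>2 + (norm (A z - b))\<^sup>2" for w
  proof -
    have split: "A w - b = A (w - z) + (A z - b)"
      by (simp add: linear_diff[OF lin])
    have orth: "A (w - z) \<bullet> (A z - b) = 0"
      using normal[of "w - z"]
      by (metis inner_commute inner_minus_left minus_diff_eq neg_equal_0_iff_equal)
    have "(norm (A w - b))\<^sup>2 = (A (w - z) + (A z - b)) \<bullet> (A (w - z) + (A z - b))"
      by (simp only: split power2_norm_eq_inner)
    also have "\<dots> = A (w - z) \<bullet> A (w - z) + (A z - b) \<bullet> (A z - b)"
      using orth by (simp only: inner_add_left inner_add_right inner_commute[of "A z - b" "A (w - z)"])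
    finally show ?thesis
      by (simp add: power2_norm_eq_inner)
  qed
  have min: "norm (A z - b) \<le> norm (A w - b)" for w
    using pythagoras[of w] by (simp add: power2_le_imp_le)
  have uniq: "w = z" if "\<forall>u. norm (A w - b) \<le> norm (A u - b)" for w
  proof -
    have "(norm (A w - b))\<^sup>2 \<le> (norm (A z - b))\<^sup>2"
      using that by (simp add: power_mono)
    then have "A (w - z) = 0"
      using pythagoras[of w] by simp
    then show "w = z"
      using inj[of "w - z"] by simp
  qed
  show ?thesis
    unfolding pinv_def by (rule the_equality) (use min uniq in blast)+
qed

lemma sing_val_subspace_bound:
  fixes A :: "'a::euclidean_space \<Rightarrow> 'b::real_normed_vector"
  assumes lin: "linear A" and c: "0 < c" "c < sing_val A k"
  obtains V where "subspace V" "dim V = k" "\<And>v. v \<in> V \<Longrightarrow> c * norm v \<le> norm (A v)"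
proof -
  let ?S = "{Inf {norm (A v) | v. v \<in> V \<and> norm v = 1} | V. subspace V \<and> dim V = k}"
  have "k \<le> DIM('a)" and sv: "sing_val A k = Sup ?S"
    using c unfolding sing_val_def by (auto split: if_splits)
  then obtain T :: "'a set" where "subspace T" "dim T = k"
    using choose_subspace_of_subspace[of k "UNIV :: 'a set"] by auto
  then have "?S \<noteq> {}" by blast
  then obtain V where V: "subspace V" "dim V = k"
    and cV: "c < Inf {norm (A v) | v. v \<in> V \<and> norm v = 1}"
    using less_cSupD[of ?S c] c sv by auto
  have "c * norm v \<le> norm (A v)" if v: "v \<in> V" for v
  proof (cases "v = 0")
    case False
    let ?u = "v /\<^sub>R norm v"
    have "?u \<in> V" "norm ?u = 1"
      using V(1) v False by (simp_all add: subspace_scale)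
    then have "Inf {norm (A v) | v. v \<in> V \<and> norm v = 1} \<le> norm (A ?u)"
      by (intro cInf_lower) (auto intro: bdd_belowI[of _ 0])
    also have "norm (A ?u) = norm (A v) / norm v"
      using linear_scale[OF lin] by (simp add: divide_inverse)
    finally have "c \<le> norm (A v) / norm v"
      using cV by linarith
    then show ?thesis
      using False by (simp add: pos_le_divide_eq)
  qed simp
  with V that show ?thesis by blast
qed

lemma linear_image_eq_UNIV_if_bounded_below:
  fixes A :: "'a::euclidean_space \<Rightarrow> 'b::euclidean_space"
  assumes lin: "linear A" and V: "subspace V" "dim V = DIM('b)"
    and c: "0 < c" "\<And>v. v \<in> V \<Longrightarrow> c * norm v \<le> norm (A v)"
  shows "A ` V = UNIV"
proof -
  have span: "span V = V"
    using V(1) span_eq_iff by blast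
  have "inj_on A (span V)"
  proof (rule inj_onI)
    fix u w assume "u \<in> span V" "w \<in> span V" "A u = A w"
    then have "u - w \<in> V" "A (u - w) = 0"
      using V(1) by (auto simp: span linear_diff[OF lin] subspace_diff)
    then show "u = w"
      using c(2)[of "u - w"] c(1) by (simp add: mult_le_0_iff)
  qed
  then have "dim (A ` V) = DIM('b)"
    using dim_image_eq[OF lin] V(2) by simp
  then have "span (A ` V) = UNIV"
    using dim_eq_full by blast
  then show ?thesis
    using linear_subspace_image[OF lin V(1)] by (metis span_eq_iff)
qed

lemma sing_val_le_norm_adjoint:
  fixes A :: "'a::euclidean_space \<Rightarrow> 'b::euclidean_space"
  assumes lin: "linear A"
  shows "sing_val A DIM('b) * norm \<mu> \<le> norm (adjoint A \<mu>)"
proof -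
  have "c * norm \<mu> \<le> norm (adjoint A \<mu>)" if c_less: "c < sing_val A DIM('b)" for c
  proof (cases "c \<le> 0")
    case True
    then show ?thesis
      by (meson mult_nonpos_nonneg norm_ge_zero order_trans)
  next
    case False
    then have c: "0 < c" by simp
    obtain V where V: "subspace V" "dim V = DIM('b)"
      and bound: "\<And>v. v \<in> V \<Longrightarrow> c * norm v \<le> norm (A v)"
      using sing_val_subspace_bound[OF lin c c_less] by blast
    then obtain v where v: "v \<in> V" "A v = \<mu>"
      using linear_image_eq_UNIV_if_bounded_below[OF lin V c] by (metis UNIV_I imageE)
    have "norm \<mu> * norm \<mu> = adjoint A \<mu> \<bullet> v"
      using adjoint_clauses(2)[OF lin, of \<mu> v] v(2) by (simp add: power2_norm_eq_inner[symmetric] power2_eq_square)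
    also have "\<dots> \<le> norm (adjoint A \<mu>) * norm v"
      by (rule norm_cauchy_schwarz)
    finally have "c * norm \<mu> * norm \<mu> \<le> norm (adjoint A \<mu>) * (c * norm v)"
      using False by (simp add: mult_left_mono algebra_simps)
    also have "\<dots> \<le> norm (adjoint A \<mu>) * norm \<mu>"
      using bound[OF v(1)] v(2) by (simp add: mult_left_mono)
    finally show ?thesis
      by (cases "\<mu> = 0") (simp_all add: mult_le_cancel_right)
  qed
  then show ?thesis
    by (cases "\<mu> = 0") (simp_all add: dense_le flip: pos_le_divide_eq)
qed

lemma orth_proj_eqI:
  fixes S :: "'a::real_inner set"
  assumes S: "subspace S" and p: "p \<in> S" "\<forall>s\<in>S. (w - p) \<bullet> s = 0"
  shows "orth_proj S w = p"
  unfolding orth_proj_def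
proof (rule the_equality)
  fix q assume q: "q \<in> S \<and> (\<forall>s\<in>S. (w - q) \<bullet> s = 0)"
  then have "p - q \<in> S"
    using S p by (simp add: subspace_diff)
  then have "(w - p) \<bullet> (p - q) = 0" "(w - q) \<bullet> (p - q) = 0"
    using p q by auto
  then have "(p - q) \<bullet> (p - q) = 0"
    by (simp add: inner_diff_left)
  then show "q = p" by simp
qed (use p in blast)

lemma inner_orth_proj:
  fixes S :: "'a::euclidean_space set"
  assumes S: "subspace S" and v: "v \<in> S"
  shows "v \<bullet> orth_proj S w = v \<bullet> w"
proof -
  obtain p z where "p \<in> span S" "\<And>u. u \<in> span S \<Longrightarrow> orthogonal z u" "w = p + z"
    using orthogonal_subspace_decomp_exists by blast
  moreover have "span S = S"
    using S span_eq_iff by blast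
  ultimately have p: "p \<in> S" "\<forall>s\<in>S. (w - p) \<bullet> s = 0"
    by (auto simp: orthogonal_def)
  then show ?thesis
    using v by (simp add: orth_proj_eqI[OF S p] inner_diff_right inner_commute)
qed

lemma orth_proj_id:
  fixes S :: "'a::real_inner set"
  shows "subspace S \<Longrightarrow> v \<in> S \<Longrightarrow> orth_proj S v = v"
  by (rule orth_proj_eqI) simp_all

lemma det_nonzero_iff_trivial_kernel:
  fixes A :: "'a::field^'n^'n"
  shows "det A \<noteq> 0 \<longleftrightarrow> (\<forall>x. A *v x = 0 \<longrightarrow> x = 0)"
  by (simp add: invertible_det_nz[symmetric] invertible_left_inverse matrix_left_invertible_ker)

section \<open>The penalty function of an equality-constrained problem\<close>

text \<open>The first-order argument in the abstract: \<open>E\<close> stands for \<open>\<nabla>g(x)\<close>, \<open>r\<close> for the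
  Riemannian gradient, \<open>c\<close> for \<open>D\<lambda>(x)\<^sup>* h(x)\<close>, \<open>a\<close> for \<open>Dh(x)\<^sup>* h(x)\<close> and \<open>t\<close> for
  \<open>\<parallel>h(x)\<parallel>\<close>.\<close>

lemma penalty_constraint_bound:
  fixes r c a E :: "'a::real_inner"
  assumes E: "E = r - c + (2 * \<beta>) *\<^sub>R a" and orth: "r \<bullet> a = 0"
    and E_le: "norm E \<le> \<epsilon>" and c_le: "norm c \<le> L * t" and a_ge: "s * t \<le> norm a"
    and \<beta>: "0 \<le> \<beta>"
  shows "(2 * \<beta> * s - L) * t \<le> \<epsilon>"
proof -
  have nonneg: "0 \<le> \<epsilon>" "0 \<le> L * t"
    using E_le c_le norm_ge_zero order_trans by blast+
  have "2 * \<beta> * (s * t) \<le> \<epsilon> + L * t"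
  proof (cases "a = 0")
    case True
    then have "\<beta> * (s * t) \<le> 0"
      using a_ge \<beta> by (simp add: mult_nonneg_nonpos)
    then show ?thesis
      using nonneg by linarith
  next
    case False
    have "2 * \<beta> * (norm a * norm a) = E \<bullet> a + c \<bullet> a"
      by (simp add: E orth inner_diff_left inner_add_left power2_norm_eq_inner[symmetric] power2_eq_square)
    also have "\<dots> \<le> (\<epsilon> + L * t) * norm a"
      using norm_cauchy_schwarz[of E a] norm_cauchy_schwarz[of c a]
        mult_right_mono[OF E_le norm_ge_zero[of a]] mult_right_mono[OF c_le norm_ge_zero[of a]]
      by (simp add: distrib_right)
    finally have "2 * \<beta> * norm a \<le> \<epsilon> + L * t"
      using False by (simp add: mult.assoc[symmetric] mult_le_cancel_right)
    moreover have "2 * \<beta> * (s * t) \<le> 2 * \<beta> * norm a"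
      using a_ge \<beta> by (simp add: mult_left_mono)
    ultimately show ?thesis
      by linarith
  qed
  then show ?thesis
    by (simp add: algebra_simps)
qed

lemma penalty_riem_grad_bound:
  fixes r c a E :: "'a::real_inner"
  assumes E: "E = r - c + (2 * \<beta>) *\<^sub>R a" and orth: "r \<bullet> a = 0"
    and E_le: "norm E \<le> \<epsilon>" and c_le: "norm c \<le> L * t"
  shows "norm r \<le> \<epsilon> + L * t"
proof -
  have "norm r * norm r = r \<bullet> E + r \<bullet> c"
    using E orth by (simp add: inner_diff_right inner_add_right power2_norm_eq_inner[symmetric] power2_eq_square)
  also have "\<dots> \<le> norm r * (\<epsilon> + L * t)"
    using norm_cauchy_schwarz[of r E] norm_cauchy_schwarz[of r c]
      mult_left_mono[OF E_le norm_ge_zero[of r]] mult_left_mono[OF c_le norm_ge_zero[of r]]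
    by (simp add: distrib_left)
  finally have "norm r * norm r \<le> norm r * (\<epsilon> + L * t)" .
  moreover have "0 \<le> \<epsilon> + L * t"
    using E_le c_le norm_ge_zero[of E] norm_ge_zero[of c] by linarith
  ultimately show ?thesis
    by (cases "r = 0") (simp_all add: mult_le_cancel_left)
qed

locale smooth_constrained_problem =
  fixes f :: "'a::euclidean_space \<Rightarrow> real" and h :: "'a \<Rightarrow> real^'m"
  assumes smooth_f: "smooth_fun f" and smooth_h: "smooth_fun h"
begin

lemma smooth_on_f: "smooth_on U f"
  using smooth_fun_imp_smooth_on[OF smooth_f bounded_linear_ident] by simp

lemma smooth_on_h_component: "smooth_on U (\<lambda>y. h y $ i)"
  using smooth_fun_imp_smooth_on[OF smooth_h bounded_linear_vec_nth] .

lemma f_differentiable: "f differentiable at y"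
  by (rule smooth_fun_differentiable[OF smooth_f])

lemma h_differentiable: "h differentiable at y"
  by (rule smooth_fun_differentiable[OF smooth_h])

lemma linear_Dh: "linear (Dh h y)"
  unfolding Dh_def using h_differentiable linear_frechet_derivative by blast

lemma Dh_component: "Dh h y u $ i = u \<bullet> grad (\<lambda>y. h y $ i) y"
  unfolding Dh_def by (rule frechet_derivative_component[OF h_differentiable])

lemma adjoint_Dh_eq_sum: "adjoint (Dh h y) \<mu> = (\<Sum>i\<in>UNIV. \<mu> $ i *\<^sub>R grad (\<lambda>y. h y $ i) y)"
  unfolding Dh_def by (simp add: adjoint_frechet_derivative[OF h_differentiable])

definition gram :: "'a \<Rightarrow> real^'m^'m" where
  "gram y = (\<chi> i j. grad (\<lambda>y. h y $ i) y \<bullet> grad (\<lambda>y. h y $ j) y)"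

lemma Dh_adjoint_Dh_eq_gram: "Dh h y (adjoint (Dh h y) \<mu>) = gram y *v \<mu>"
  by (simp add: vec_eq_iff Dh_component adjoint_Dh_eq_sum gram_def matrix_vector_mult_def
      inner_sum_left inner_sum_right inner_commute mult.commute)

text \<open>Cramer's rule for the normal equations \<open>Dh Dh\<^sup>* \<lambda> = Dh \<nabla>f\<close> defining \<open>\<lambda>\<close>.\<close>

definition lam_cramer :: "'a \<Rightarrow> real^'m" where
  "lam_cramer y = (\<chi> k. det (\<chi> i j. if j = k then Dh h y (grad f y) $ i else gram y $ i $ j) / det (gram y))"

definition regular :: "'a set" where
  "regular = {y. det (gram y) \<noteq> 0}"

lemma smooth_on_gram: "open U \<Longrightarrow> smooth_on U (\<lambda>y. gram y $ i $ j)"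
  unfolding gram_def by (simp add: smooth_on_inner_grad smooth_on_h_component)

lemma open_regular: "open regular"
proof -
  have "smooth_on UNIV (\<lambda>y. det (gram y))"
    by (intro smooth_on_det smooth_on_gram) auto
  then have "continuous_on UNIV (\<lambda>y. det (gram y))"
    by (meson differentiable_imp_continuous_within continuous_at_imp_continuous_on
        smooth_on_differentiable UNIV_I)
  then show ?thesis
    unfolding regular_def by (rule open_Collect_neq) simp
qed

lemma smooth_on_lam_cramer: "smooth_on regular (\<lambda>y. lam_cramer y $ k)"
proof -
  have "smooth_on regular (\<lambda>y. Dh h y (grad f y) $ i)" for i
    by (simp add: Dh_component inner_commute smooth_on_inner_grad open_regular smooth_on_f
        smooth_on_h_component)
  then have "smooth_on regular (\<lambda>y. if j = k then Dh h y (grad f y) $ i else gram y $ i $ j)" for i j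
    by (cases "j = k") (simp_all add: smooth_on_gram open_regular)
  then have "smooth_on regular
      (\<lambda>y. det (\<chi> i j. if j = k then Dh h y (grad f y) $ i else gram y $ i $ j))"
    by (intro smooth_on_det open_regular) simp
  moreover have "smooth_on regular (\<lambda>y. det (gram y))"
    by (rule smooth_on_det[OF open_regular smooth_on_gram[OF open_regular]])
  moreover have "\<forall>y\<in>regular. det (gram y) \<noteq> 0"
    by (simp add: regular_def)
  ultimately show ?thesis
    unfolding lam_cramer_def vec_lambda_beta by (rule smooth_on_divide[OF open_regular])
qed

lemma gram_lam_cramer: "y \<in> regular \<Longrightarrow> gram y *v lam_cramer y = Dh h y (grad f y)"
  unfolding regular_def lam_cramer_def by (simp add: cramer)

lemma lam_eq_lam_cramer:
  assumes "y \<in> regular"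
  shows "lam f h y = lam_cramer y"
  unfolding lam_def
proof (rule pinv_eqI)
  show "linear (adjoint (Dh h y))"
    by (rule adjoint_linear[OF linear_Dh])
next
  fix u
  have "(grad f y - adjoint (Dh h y) (lam_cramer y)) \<bullet> adjoint (Dh h y) u =
      Dh h y (grad f y - adjoint (Dh h y) (lam_cramer y)) \<bullet> u"
    by (rule adjoint_works[OF linear_Dh])
  also have "\<dots> = 0"
    using gram_lam_cramer[OF assms] by (simp add: linear_diff[OF linear_Dh] Dh_adjoint_Dh_eq_gram)
  finally show "(grad f y - adjoint (Dh h y) (lam_cramer y)) \<bullet> adjoint (Dh h y) u = 0" .
next
  fix w assume "adjoint (Dh h y) w = 0"
  then have "gram y *v w = 0"
    using Dh_adjoint_Dh_eq_gram[of y w] linear_0[OF linear_Dh] by simp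
  then show "w = 0"
    using assms det_nonzero_iff_trivial_kernel unfolding regular_def by blast
qed

lemma smooth_on_lam: "smooth_on regular (\<lambda>y. lam f h y $ k)"
  by (rule smooth_on_cong[OF open_regular smooth_on_lam_cramer[of k]]) (simp add: lam_eq_lam_cramer)

lemma lam_differentiable: "y \<in> regular \<Longrightarrow> lam f h differentiable at y"
  by (rule vec_differentiable_componentwise) (rule smooth_on_differentiable[OF smooth_on_lam])

lemma Dh_riem_grad:
  assumes "y \<in> regular"
  shows "Dh h y (riem_grad f h y) = 0"
  using gram_lam_cramer[OF assms]
  by (simp add: riem_grad_def lam_eq_lam_cramer[OF assms] linear_diff[OF linear_Dh] Dh_adjoint_Dh_eq_gram)

lemma inj_adjoint_Dh_if_sigma_min_pos:
  assumes "sigma_min h y > 0"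
  shows "inj (adjoint (Dh h y))"
proof -
  have "sigma_min h y * norm \<mu> \<le> norm (adjoint (Dh h y) \<mu>)" for \<mu>
    using sing_val_le_norm_adjoint[OF linear_Dh] unfolding sigma_min_def by simp
  then have "\<mu> = 0" if "adjoint (Dh h y) \<mu> = 0" for \<mu>
    using assms that by (metis mult_le_0_iff norm_le_zero_iff norm_zero not_le)
  then show ?thesis
    using linear_injective_0[OF adjoint_linear[OF linear_Dh]] by blast
qed

lemma regular_if_sigma_min_pos:
  assumes "sigma_min h y > 0"
  shows "y \<in> regular"
proof -
  have "\<mu> = 0" if "gram y *v \<mu> = 0" for \<mu>
  proof -
    have "adjoint (Dh h y) \<mu> \<bullet> adjoint (Dh h y) \<mu> = 0"
      using that by (simp add: adjoint_works[OF linear_Dh] Dh_adjoint_Dh_eq_gram)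
    then show ?thesis
      using inj_adjoint_Dh_if_sigma_min_pos[OF assms] linear_injective_0[OF adjoint_linear[OF linear_Dh]]
      by simp
  qed
  then show ?thesis
    unfolding regular_def using det_nonzero_iff_trivial_kernel by blast
qed

lemma fullrank_if_sigma_min_pos:
  assumes "sigma_min h y > 0"
  shows "y \<in> fullrank_set h"
proof -
  have "surj (Dh h y)"
    using inj_adjoint_Dh_if_sigma_min_pos[OF assms] inj_adjoint_iff_surj[OF linear_Dh] by blast
  then show ?thesis
    unfolding fullrank_set_def by simp
qed

abbreviation Dh_adj :: "'a \<Rightarrow> (real^'m) \<Rightarrow>\<^sub>L 'a" where
  "Dh_adj y \<equiv> Blinfun (adjoint (Dh h y))"

abbreviation Dlam_adj :: "'a \<Rightarrow> (real^'m) \<Rightarrow>\<^sub>L 'a" where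
  "Dlam_adj y \<equiv> Blinfun (adjoint (frechet_derivative (lam f h) (at y)))"

lemma linear_Dlam: "y \<in> regular \<Longrightarrow> linear (frechet_derivative (lam f h) (at y))"
  using lam_differentiable linear_frechet_derivative by blast

lemma has_derivative_Dh_adj:
  "(Dh_adj has_derivative frechet_derivative Dh_adj (at x)) (at x)"
  and Dh_adj_derivative_apply:
  "blinfun_apply (frechet_derivative Dh_adj (at x) v) \<mu> = (\<Sum>i\<in>UNIV. \<mu> $ i *\<^sub>R hess (\<lambda>y. h y $ i) x v)"
proof -
  have D: "(Dh_adj has_derivative
      (\<lambda>v. \<Sum>i\<in>UNIV. component_blinfun i (hess (\<lambda>y. h y $ i) x v))) (at x)"
    unfolding Dh_def by (rule has_derivative_Blinfun_adjoint[OF open_UNIV UNIV_I smooth_on_h_component])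
  then show "(Dh_adj has_derivative frechet_derivative Dh_adj (at x)) (at x)"
    by (simp add: frechet_derivative_at[OF D, symmetric])
  show "blinfun_apply (frechet_derivative Dh_adj (at x) v) \<mu> = (\<Sum>i\<in>UNIV. \<mu> $ i *\<^sub>R hess (\<lambda>y. h y $ i) x v)"
    by (simp add: frechet_derivative_at[OF D, symmetric] blinfun.sum_left)
qed

lemma has_derivative_Dlam_adj:
  assumes "x \<in> regular"
  shows "(Dlam_adj has_derivative frechet_derivative Dlam_adj (at x)) (at x)"
  using has_derivative_Blinfun_adjoint[OF open_regular assms smooth_on_lam]
  by (simp add: frechet_derivative_at[symmetric])

lemma grad_gfun:
  assumes y: "y \<in> regular"
  shows "grad (gfun f h \<beta>) y = riem_grad f h y - adjoint (frechet_derivative (lam f h) (at y)) (h y)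
    + (2 * \<beta>) *\<^sub>R adjoint (Dh h y) (h y)"
proof (rule grad_eqI)
  let ?Dlam = "frechet_derivative (lam f h) (at y)"
  have gfun_eq: "gfun f h \<beta> = (\<lambda>y. f y - h y \<bullet> lam f h y + \<beta> * (h y \<bullet> h y))"
    by (simp add: fun_eq_iff gfun_def power2_norm_eq_inner)
  have "(gfun f h \<beta> has_derivative (\<lambda>v. frechet_derivative f (at y) v
      - (h y \<bullet> ?Dlam v + Dh h y v \<bullet> lam f h y) + \<beta> * (h y \<bullet> Dh h y v + Dh h y v \<bullet> h y))) (at y)"
    unfolding gfun_eq Dh_def
    by (intro has_derivative_add has_derivative_diff has_derivative_mult_right has_derivative_inner
        frechet_derivative_works[THEN iffD1] f_differentiable h_differentiable lam_differentiable[OF y])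
  moreover have "(\<lambda>v. frechet_derivative f (at y) v
      - (h y \<bullet> ?Dlam v + Dh h y v \<bullet> lam f h y) + \<beta> * (h y \<bullet> Dh h y v + Dh h y v \<bullet> h y)) =
    (\<lambda>v. v \<bullet> (riem_grad f h y - adjoint ?Dlam (h y) + (2 * \<beta>) *\<^sub>R adjoint (Dh h y) (h y)))"
    by (simp add: fun_eq_iff riem_grad_def frechet_derivative_eq_inner_grad[OF f_differentiable]
        adjoint_works[OF linear_Dh] adjoint_works[OF linear_Dlam[OF y]] inner_diff_right
        inner_add_right inner_commute algebra_simps)
  ultimately show "GDERIV (gfun f h \<beta>) y :> riem_grad f h y - adjoint ?Dlam (h y)
      + (2 * \<beta>) *\<^sub>R adjoint (Dh h y) (h y)"
    unfolding gderiv_def by simp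
qed

lemma inner_hess_gfun:
  assumes x: "x \<in> regular" and v: "Dh h x v = 0"
  shows "v \<bullet> hess (gfun f h \<beta>) x v = v \<bullet> hess f x v
    - v \<bullet> frechet_derivative Dh_adj (at x) v (lam f h x)
    - v \<bullet> frechet_derivative Dlam_adj (at x) v (h x)
    + 2 * \<beta> * (v \<bullet> frechet_derivative Dh_adj (at x) v (h x))"
proof -
  let ?Dlam = "\<lambda>y. frechet_derivative (lam f h) (at y)"
  let ?DDh = "frechet_derivative Dh_adj (at x)"
  let ?DDlam = "frechet_derivative Dlam_adj (at x)"
  let ?H = "\<lambda>w. hess f x w - (Dh_adj x (?Dlam x w) + ?DDh w (lam f h x))
    - (Dlam_adj x (Dh h x w) + ?DDlam w (h x)) + (2 * \<beta>) *\<^sub>R (Dh_adj x (Dh h x w) + ?DDh w (h x))"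
  have "((\<lambda>y. grad f y - Dh_adj y (lam f h y) - Dlam_adj y (h y) + (2 * \<beta>) *\<^sub>R Dh_adj y (h y))
      has_derivative ?H) (at x)"
    using h_differentiable lam_differentiable[OF x] unfolding Dh_def frechet_derivative_works
    by (intro has_derivative_add has_derivative_diff has_derivative_scaleR_right blinfun.FDERIV
        has_derivative_grad_hess[OF open_UNIV UNIV_I smooth_on_f] has_derivative_Dh_adj[unfolded Dh_def]
        has_derivative_Dlam_adj[OF x])
  then have "(grad (gfun f h \<beta>) has_derivative ?H) (at x)"
    by (rule has_derivative_transform_within_open[OF _ open_regular x])
      (simp add: grad_gfun riem_grad_def Blinfun_adjoint_apply linear_Dh linear_Dlam)
  then have "hess (gfun f h \<beta>) x = ?H"
    unfolding hess_def by (rule frechet_derivative_at[symmetric])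
  \<comment> \<open>on \<open>ker Dh(x)\<close> every term containing \<open>Dh x v\<close> or \<open>Dh(x)\<^sup>*\<close> drops out\<close>
  moreover have "v \<bullet> Dh_adj x w = 0" for w
    using v by (simp add: Blinfun_adjoint_apply linear_Dh adjoint_works[OF linear_Dh])
  ultimately show ?thesis
    using v by (simp add: inner_diff_right inner_add_right)
qed

lemma inner_riem_hess:
  assumes v: "Dh h x v = 0"
  shows "v \<bullet> riem_hess f h x v = v \<bullet> hess f x v - v \<bullet> frechet_derivative Dh_adj (at x) v (lam f h x)"
proof -
  have S: "subspace {w. Dh h x w = 0}"
    by (rule linear_subspace_kernel[OF linear_Dh])
  then show ?thesis
    using v by (simp add: riem_hess_def orth_proj_id inner_orth_proj Dh_adj_derivative_apply
        inner_diff_right inner_sum_right)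
qed

lemma bounded_linear_Dlam: "y \<in> regular \<Longrightarrow> bounded_linear (frechet_derivative (lam f h) (at y))"
  using lam_differentiable frechet_derivative_works has_derivative_bounded_linear by blast

lemma first_order_estimates:
  assumes s: "sigma_min h x > 0" and \<beta>: "\<beta> > max (beta2 f h x) (beta3 h x)"
    and E: "norm (grad (gfun f h \<beta>) x) \<le> \<epsilon>"
  shows "norm (h x) \<le> \<epsilon>" and "\<beta> * sigma_min h x * norm (h x) \<le> \<epsilon>"
    and "norm (riem_grad f h x) \<le> 2 * \<epsilon>"
proof -
  let ?s = "sigma_min h x" and ?L = "C_lam f h x" and ?t = "norm (h x)"
  have x: "x \<in> regular"
    by (rule regular_if_sigma_min_pos[OF s])
  have \<beta>s: "1 < \<beta> * ?s" "?L < \<beta> * ?s"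
    using \<beta> s by (auto simp: beta2_def beta3_def field_simps)
  have "riem_grad f h x \<bullet> adjoint (Dh h x) (h x) = 0"
    by (simp add: adjoint_works[OF linear_Dh] Dh_riem_grad[OF x])
  moreover have "norm (adjoint (frechet_derivative (lam f h) (at x)) (h x)) \<le> ?L * ?t"
    unfolding C_lam_def by (rule norm_adjoint_le_onorm[OF bounded_linear_Dlam[OF x]])
  moreover have "?s * ?t \<le> norm (adjoint (Dh h x) (h x))"
    using sing_val_le_norm_adjoint[OF linear_Dh] by (simp add: sigma_min_def)
  moreover have "0 \<le> \<beta>"
    using \<beta>s s by (smt (verit) mult_nonpos_nonneg)
  ultimately have key: "(2 * \<beta> * ?s - ?L) * ?t \<le> \<epsilon>"
    and grad: "norm (riem_grad f h x) \<le> \<epsilon> + ?L * ?t"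
    using penalty_constraint_bound[OF grad_gfun[OF x] _ E] penalty_riem_grad_bound[OF grad_gfun[OF x] _ E]
    by blast+
  have bound: "k * ?t \<le> \<epsilon>" if "k \<le> 2 * (\<beta> * ?s) - ?L" for k
    using key mult_right_mono[OF that norm_ge_zero[of "h x"]] by (simp add: mult.assoc)
  show "?t \<le> \<epsilon>"
    using bound[of 1] \<beta>s by simp
  show "\<beta> * ?s * ?t \<le> \<epsilon>"
    using bound[of "\<beta> * ?s"] \<beta>s by simp
  show "norm (riem_grad f h x) \<le> 2 * \<epsilon>"
    using bound[of ?L] \<beta>s grad by simp
qed

lemma second_order_estimate:
  assumes s: "sigma_min h x > 0" and \<beta>: "0 \<le> \<beta>" and v: "Dh h x v = 0"
    and hess: "v \<bullet> hess (gfun f h \<beta>) x v \<ge> - \<epsilon>2 * (norm v)\<^sup>2"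
  shows "v \<bullet> riem_hess f h x v \<ge> - (\<epsilon>2 + (onorm (frechet_derivative Dlam_adj (at x))
      + 2 * \<beta> * onorm (frechet_derivative Dh_adj (at x))) * norm (h x)) * (norm v)\<^sup>2"
proof -
  let ?DDh = "frechet_derivative Dh_adj (at x)"
  let ?DDlam = "frechet_derivative Dlam_adj (at x)"
  have x: "x \<in> regular"
    by (rule regular_if_sigma_min_pos[OF s])
  have "\<bar>v \<bullet> ?DDlam v (h x)\<bar> \<le> onorm ?DDlam * (norm v)\<^sup>2 * norm (h x)"
    using has_derivative_Dlam_adj[OF x] has_derivative_bounded_linear inner_blinfun_apply_le_onorm
    by blast
  moreover have "\<bar>v \<bullet> ?DDh v (h x)\<bar> \<le> onorm ?DDh * (norm v)\<^sup>2 * norm (h x)"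
    using has_derivative_Dh_adj has_derivative_bounded_linear inner_blinfun_apply_le_onorm by blast
  then have "2 * \<beta> * (v \<bullet> ?DDh v (h x)) \<le> 2 * \<beta> * (onorm ?DDh * (norm v)\<^sup>2 * norm (h x))"
    using \<beta> by (intro mult_left_mono) auto
  moreover have "v \<bullet> riem_hess f h x v = v \<bullet> hess (gfun f h \<beta>) x v
      + v \<bullet> ?DDlam v (h x) - 2 * \<beta> * (v \<bullet> ?DDh v (h x))"
    by (simp add: inner_riem_hess[OF v] inner_hess_gfun[OF x v])
  moreover have "- (\<epsilon>2 + (onorm ?DDlam + 2 * \<beta> * onorm ?DDh) * norm (h x)) * (norm v)\<^sup>2 =
      - \<epsilon>2 * (norm v)\<^sup>2 - onorm ?DDlam * (norm v)\<^sup>2 * norm (h x)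
      - 2 * \<beta> * (onorm ?DDh * (norm v)\<^sup>2 * norm (h x))"
    by (simp add: algebra_simps)
  ultimately show ?thesis
    using hess by linarith
qed

lemma hessian_correction_le_C_const:
  assumes s: "sigma_min h x > 0" and \<beta>: "\<beta> > max (beta2 f h x) (beta3 h x)"
    and E: "norm (grad (gfun f h \<beta>) x) \<le> \<epsilon>"
  shows "(onorm (frechet_derivative Dlam_adj (at x)) + 2 * \<beta> * onorm (frechet_derivative Dh_adj (at x)))
    * norm (h x) \<le> C_const f h x * \<epsilon>"
proof -
  let ?s = "sigma_min h x"
  let ?Ch = "onorm (frechet_derivative Dh_adj (at x))"
  let ?Clam = "onorm (frechet_derivative Dlam_adj (at x))"
  note first_order = first_order_estimates[OF s \<beta> E]
  have "\<beta> * norm (h x) \<le> \<epsilon> / ?s"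
    using first_order(2) s by (simp add: pos_le_divide_eq algebra_simps)
  moreover have "0 \<le> ?Ch" "0 \<le> ?Clam"
    using has_derivative_Dh_adj has_derivative_Dlam_adj[OF regular_if_sigma_min_pos[OF s]]
    by (meson has_derivative_bounded_linear onorm_pos_le)+
  ultimately have "?Clam * norm (h x) + 2 * ?Ch * (\<beta> * norm (h x)) \<le> ?Clam * \<epsilon> + 2 * ?Ch * (\<epsilon> / ?s)"
    using first_order(1) by (intro add_mono mult_left_mono) auto
  then show ?thesis
    unfolding C_const_def by (simp add: algebra_simps)
qed

end

theorem mainTheorem4:
  fixes f :: "'a::euclidean_space \<Rightarrow> real" and h :: "'a \<Rightarrow> real^'m"
    and R \<sigma> \<beta> \<epsilon>1 \<epsilon>2 :: real and x :: 'a
  assumes "smooth_fun f" and "smooth_fun h"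
    and A1: "R > 0" "\<sigma> > 0" "\<forall>y. norm (h y) \<le> R \<longrightarrow> sigma_min h y \<ge> \<sigma>"
    and "\<beta> \<ge> 0"
    and "norm (h x) \<le> R"
    and "\<beta> > max (beta2 f h x) (beta3 h x)"
    and "norm (grad (gfun f h \<beta>) x) \<le> \<epsilon>1"
    and "\<forall>v. inner v (hess (gfun f h \<beta>) x v) \<ge> - \<epsilon>2 * (norm v)\<^sup>2"
  shows "approx_socp f h \<epsilon>1 (2 * \<epsilon>1) (\<epsilon>2 + C_const f h x * \<epsilon>1) x"
proof -
  interpret smooth_constrained_problem f h
    using assms(1,2) by unfold_locales
  have s: "sigma_min h x > 0"
    using A1 assms(7) by force
  have "inner v (riem_hess f h x v) \<ge> - (\<epsilon>2 + C_const f h x * \<epsilon>1) * (norm v)\<^sup>2"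
    if v: "Dh h x v = 0" for v
    using second_order_estimate[OF s assms(6) v assms(10)[rule_format]]
      mult_right_mono[OF hessian_correction_le_C_const[OF s assms(8,9)] zero_le_power2[of "norm v"]]
    by (simp add: algebra_simps; linarith)
  then show ?thesis
    unfolding approx_socp_def
    using fullrank_if_sigma_min_pos[OF s] first_order_estimates[OF s assms(8,9)] by simp
qed

end
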